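(* Let $\mathcal L:\mathbb F^{q\times q}\to\mathbb F^{n\times n}$ be $*$-linear with Choi matrix $\mathbb L$ and matricization $L=[L_{ij}]$, and set $m=\operatorname{rank}\mathbb L$. Let $L_1,\ldots,L_m$ and $L_1',\ldots,L_m'$ in $\mathbb F^{n\times q}$ both span $\operatorname{span}\{L_{ij}:1\le i\le n,1\le j\le q\}$. Let $A_1,\ldots,A_m$, $\mathbb H$ be obtained from $L_1,\ldots,L_m$ by the construction below, and $A_1',\ldots,A_m'$, $\mathbb H'$ likewise from $L_1',\ldots,L_m'$. Then there is an invertible $\Phi\in\mathbb F^{m\times m}$ with $$\begin{bmatrix}L_1\\ \vdots\\ L_m\end{bmatrix}=(\Phi\otimes I_n)\begin{bmatrix}L_1'\\ \vdots\\ L_m'\end{bmatrix},\qquad (\Phi^*\otimes I_n)\begin{bmatrix}A_1\\ \vdots\\ A_m\end{bmatrix}=\begin{bmatrix}A_1'\\ \vdots\\ A_m'\end{bmatrix},\qquad \mathbb H=\Phi\mathbb H'\Phi^*.$$ In fact one may take $\Phi=[\vec{\mathbf 1}_n^*(B_k\circ\overline{A_l'})\vec{\mathbf 1}_q]_{k,l=1}^m$.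
   Context: $\mathbb F\in\{\mathbb R,\mathbb C\}$; $\otimes$ is the Kronecker product, $\circ$ the Hadamard product, $\vec{\mathbf 1}_p$ the all-ones vector. For $T\in\mathbb F^{r\times s}$, $\operatorname{vec}_{r\times s}(T)$ is column-stacking vectorization. For linear $\mathcal L:\mathbb F^{q\times q}\to\mathbb F^{n\times n}$: matricization $L\in\mathbb F^{n^2\times q^2}$ with $L\operatorname{vec}(V)=\operatorname{vec}(\mathcal L(V))$, written as $L=[L_{ij}]$, $1\le i\le n$, $1\le j\le q$, blocks $L_{ij}\in\mathbb F^{n\times q}$; Choi matrix $\mathbb L=[\mathcal L(\mathcal E^{(q)}_{ij})]_{i,j=1}^q$ where $\mathcal E^{(q)}_{ij}$ are standard basis matrices. $*$-linear means $\mathcal L(V^* )=\mathcal L(V)^*$. Construction: given $L_1,\ldots,L_m$ spanning $\operatorname{span}\{L_{ij}\}$ ($m=\operatorname{rank}\mathbb L$), let $L_{ij}=\sum_k\alpha^{ij}_kL_k$ (unique scalars) and $L_k=\sum_{i,j}\beta^k_{ij}L_{ij}$ (any choice); $A_k$ has $(i,j)$ entry $\overline{\alpha^{ij}_k}$, $B_k$ has $(i,j)$ entry $\beta^k_{ij}$, and $\mathbb H=[\vec{\mathbf 1}_n^*(B_k\circ\overline{L_l})\vec{\mathbf 1}_q]_{k,l=1}^m$. Analogously $\alpha'^{ij}_k,\beta'^k_{ij},A_k',B_k',\mathbb H'$ for $L_1',\ldots,L_m'$. *)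

theory Defs
  imports "Jordan_Normal_Form.Schur_Decomposition" "Jordan_Normal_Form.DL_Rank"
begin

(* Scalars: a field with an involutive conjugation (class conjugatable_field);
   instances include real (conjugate = id) and complex (conjugate = cnj).
   All indices are 0-based. *)

definition std_basis :: "nat \<Rightarrow> nat \<Rightarrow> nat \<Rightarrow> 'a::zero_neq_one mat" where
  "std_basis q i j = mat q q (\<lambda>(r,s). if r = i \<and> s = j then 1 else 0)"

definition vec_col :: "'a mat \<Rightarrow> 'a vec" where
  "vec_col A = vec (dim_row A * dim_col A) (\<lambda>k. A $$ (k mod dim_row A, k div dim_row A))"

definition choi_matrix :: "('a::zero_neq_one mat \<Rightarrow> 'a mat) \<Rightarrow> nat \<Rightarrow> nat \<Rightarrow> 'a mat" where
  "choi_matrix Lm n q = mat (q*n) (q*n)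
     (\<lambda>(r,c). Lm (std_basis q (r div n) (c div n)) $$ (r mod n, c mod n))"

definition blk :: "'a mat \<Rightarrow> nat \<Rightarrow> nat \<Rightarrow> nat \<Rightarrow> nat \<Rightarrow> 'a mat" where
  "blk M n q i j = mat n q (\<lambda>(a,b). M $$ (i*n + a, j*q + b))"

definition lin_comb :: "nat \<Rightarrow> nat \<Rightarrow> 'i set \<Rightarrow> ('i \<Rightarrow> 'a::comm_ring_1) \<Rightarrow> ('i \<Rightarrow> 'a mat) \<Rightarrow> 'a mat" where
  "lin_comb n q K c F = mat n q (\<lambda>(a,b). \<Sum>k\<in>K. c k * F k $$ (a,b))"

definition mspan :: "nat \<Rightarrow> nat \<Rightarrow> 'i set \<Rightarrow> ('i \<Rightarrow> 'a::comm_ring_1 mat) \<Rightarrow> 'a mat set" where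
  "mspan n q K F = {lin_comb n q K c F | c. True}"

definition kron :: "'a::times mat \<Rightarrow> 'a mat \<Rightarrow> 'a mat" where
  "kron A B = mat (dim_row A * dim_row B) (dim_col A * dim_col B)
     (\<lambda>(r,c). A $$ (r div dim_row B, c div dim_col B) * B $$ (r mod dim_row B, c mod dim_col B))"

definition vstack :: "nat \<Rightarrow> nat \<Rightarrow> nat \<Rightarrow> (nat \<Rightarrow> 'a mat) \<Rightarrow> 'a mat" where
  "vstack n q m F = mat (m*n) q (\<lambda>(r,c). F (r div n) $$ (r mod n, c))"

definition hadamard :: "'a::times mat \<Rightarrow> 'a mat \<Rightarrow> 'a mat" where
  "hadamard A B = mat (dim_row A) (dim_col A) (\<lambda>(i,j). A $$ (i,j) * B $$ (i,j))"

definition ones_vec :: "nat \<Rightarrow> 'a::one vec" where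
  "ones_vec p = vec p (\<lambda>_. 1)"

definition mat_conj :: "'a::conjugate mat \<Rightarrow> 'a mat" where
  "mat_conj A = mat (dim_row A) (dim_col A) (\<lambda>ij. conjugate (A $$ ij))"

definition ones_form :: "'a::conjugatable_field mat \<Rightarrow> 'a mat \<Rightarrow> 'a" where
  "ones_form B X = conjugate (ones_vec (dim_row B)) \<bullet> (hadamard B (mat_conj X) *\<^sub>v ones_vec (dim_col B))"

definition coefA :: "nat \<Rightarrow> nat \<Rightarrow> (nat \<Rightarrow> nat \<Rightarrow> nat \<Rightarrow> 'a::conjugatable_field) \<Rightarrow> nat \<Rightarrow> 'a mat" where
  "coefA n q alpha k = mat n q (\<lambda>(i,j). conjugate (alpha i j k))"

definition coefB :: "nat \<Rightarrow> nat \<Rightarrow> (nat \<Rightarrow> nat \<Rightarrow> nat \<Rightarrow> 'a) \<Rightarrow> nat \<Rightarrow> 'a mat" where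
  "coefB n q beta k = mat n q (\<lambda>(i,j). beta k i j)"

definition constrH :: "nat \<Rightarrow> (nat \<Rightarrow> 'a::conjugatable_field mat) \<Rightarrow> (nat \<Rightarrow> 'a mat) \<Rightarrow> 'a mat" where
  "constrH m B Lk = mat m m (\<lambda>(k,l). ones_form (B k) (Lk l))"

end

theory Submission
  imports Defs
begin

text \<open>
  Up to reindexing, the blocks \<open>L\<^sub>i\<^sub>j\<close> of the matricization are the columns of the Choi
  matrix, so their span has dimension \<open>m\<close>; hence any \<open>m\<close> matrices spanning it are linearly
  independent, and coefficients with respect to them are unique. Substituting the
  \<open>\<beta>\<close>-expansion of \<open>L\<^sub>k\<close> into the \<open>\<alpha>'\<close>-expansion of the blocks gives
  \<open>L\<^sub>k = \<Sum>\<^sub>l \<Phi>\<^sub>k\<^sub>l L'\<^sub>l\<close>; the same construction with the two families exchanged is an inverse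
  of \<open>\<Phi>\<close>, and comparing the two expansions of each block gives \<open>\<alpha>'\<^sup>i\<^sup>j = \<alpha>\<^sup>i\<^sup>j \<Phi>\<close>,
  which is the relation between the \<open>A\<^sub>k\<close>. Finally, \<open>*\<close>-linearity makes the block array
  Hermitian, \<open>(L\<^sub>i\<^sub>j)\<^sub>a\<^sub>b = conj ((L\<^sub>a\<^sub>b)\<^sub>i\<^sub>j)\<close>. Hence the form
  \<open>\<langle>B, X\<rangle> = 1\<^sup>* (B \<circ> conj X) 1\<close> defining \<open>H\<close> satisfies \<open>\<langle>B\<^sub>k, L\<^sub>l\<rangle> = \<langle>L\<^sub>k, B\<^sub>l\<rangle>\<close>,
  and moving \<open>\<Phi>\<close> across this form turns \<open>H'\<close> into \<open>H\<close>.
\<close>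

lemma conjugate_one [simp]: "conjugate (1::'a::conjugatable_field) = 1"
proof -
  have "conjugate (1::'a) * conjugate 1 = conjugate 1"
    by (simp flip: conjugate_dist_mul)
  then show ?thesis
    by (metis conjugate_zero_iff mult_cancel_right1 zero_neq_one)
qed

lemma dim_mat_adjoint [simp]:
  "dim_row (mat_adjoint A) = dim_col A" "dim_col (mat_adjoint A) = dim_row A"
  unfolding mat_adjoint_def by auto

lemma index_mat_adjoint [simp]:
  "i < dim_col A \<Longrightarrow> j < dim_row A \<Longrightarrow> mat_adjoint A $$ (i,j) = conjugate (A $$ (j,i))"
  unfolding mat_adjoint_def by (simp add: mat_of_rows_index conjugate_vec_def)

lemma mat_adjoint_std_basis:
  "i < q \<Longrightarrow> j < q \<Longrightarrow> mat_adjoint (std_basis q i j :: 'a::conjugatable_field mat) = std_basis q j i"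
  by (rule eq_matI) (auto simp: std_basis_def)

lemma vec_col_std_basis:
  assumes "c < q" "d < q"
  shows "vec_col (std_basis q c d :: 'a::zero_neq_one mat) = unit_vec (q*q) (c + q*d)"
proof (rule eq_vecI)
  fix k assume "k < dim_vec (unit_vec (q*q) (c + q*d) :: 'a vec)"
  then have k: "k < q*q" by simp
  have "(k mod q = c \<and> k div q = d) \<longleftrightarrow> k = c + q*d"
    using assms mod_mult_div_eq[of k q] by auto
  then show "vec_col (std_basis q c d) $ k = unit_vec (q*q) (c + q*d) $ k"
    using k assms unfolding vec_col_def std_basis_def unit_vec_def
    by (auto simp: less_mult_imp_div_less)
qed (simp add: vec_col_def std_basis_def)

lemma vec_col_carrier: "X \<in> carrier_mat n q \<Longrightarrow> vec_col X \<in> carrier_vec (q*n)"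
  by (simp add: vec_col_def)

lemma index_vec_col:
  "X \<in> carrier_mat n q \<Longrightarrow> r < q*n \<Longrightarrow> vec_col X $ r = X $$ (r mod n, r div n)"
  by (simp add: vec_col_def mult.commute)

lemma blk_carrier [simp]: "blk M n q i j \<in> carrier_mat n q"
  by (simp add: blk_def)

lemma dim_lin_comb [simp]:
  "dim_row (lin_comb n q K c F) = n" "dim_col (lin_comb n q K c F) = q"
  by (simp_all add: lin_comb_def)

lemma lin_comb_carrier [simp]: "lin_comb n q K c F \<in> carrier_mat n q"
  by (simp add: carrier_matI)

lemma index_lin_comb [simp]:
  "i < n \<Longrightarrow> j < q \<Longrightarrow> lin_comb n q K c F $$ (i,j) = (\<Sum>k\<in>K. c k * F k $$ (i,j))"
  by (simp add: lin_comb_def)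

lemma lin_comb_cong:
  "(\<And>k. k \<in> K \<Longrightarrow> c k = d k) \<Longrightarrow> lin_comb n q K c F = lin_comb n q K d F"
  unfolding lin_comb_def by (metis (no_types, lifting) sum.cong)

lemma lin_comb_lin_comb:
  assumes "\<And>k. k \<in> K \<Longrightarrow> F k = lin_comb n q J (d k) G"
  shows "lin_comb n q K c F = lin_comb n q J (\<lambda>j. \<Sum>k\<in>K. c k * d k j) G"
proof (rule eq_matI)
  fix i j assume "i < dim_row (lin_comb n q J (\<lambda>j. \<Sum>k\<in>K. c k * d k j) G)"
    "j < dim_col (lin_comb n q J (\<lambda>j. \<Sum>k\<in>K. c k * d k j) G)"
  then have ij: "i < n" "j < q" by simp_all
  have "lin_comb n q K c F $$ (i,j) = (\<Sum>k\<in>K. \<Sum>l\<in>J. c k * d k l * G l $$ (i,j))"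
    using assms ij by (simp add: sum_distrib_left mult.assoc)
  also have "\<dots> = lin_comb n q J (\<lambda>j. \<Sum>k\<in>K. c k * d k j) G $$ (i,j)"
    using ij by (subst sum.swap) (simp add: sum_distrib_right)
  finally show "lin_comb n q K c F $$ (i,j) = lin_comb n q J (\<lambda>j. \<Sum>k\<in>K. c k * d k j) G $$ (i,j)" .
qed simp_all

lemma lin_comb_delta:
  assumes "finite K" "k \<in> K" "F k \<in> carrier_mat n q"
  shows "lin_comb n q K (\<lambda>l. if l = k then 1 else 0) F = F k"
proof -
  have "(\<Sum>l\<in>K. (if l = k then 1 else 0) * F l $$ x) = F k $$ x" for x
    using assms(1,2) by (simp add: if_distrib if_distribR cong: if_cong)
  then show ?thesis
    by (intro eq_matI) (use assms(3) in \<open>auto simp: lin_comb_def\<close>)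
qed

lemma ones_form_sum:
  assumes "B \<in> carrier_mat n q" "X \<in> carrier_mat n q"
  shows "ones_form B X = (\<Sum>x\<in>{..<n} \<times> {..<q}. B $$ x * conjugate (X $$ x))"
  using assms unfolding ones_form_def
  by (simp add: scalar_prod_def ones_vec_def conjugate_vec_def hadamard_def mat_conj_def
      sum.cartesian_product lessThan_atLeast0 case_prod_beta)

lemma ones_form_lin_comb_left:
  assumes "finite K" "\<And>k. k \<in> K \<Longrightarrow> F k \<in> carrier_mat n q" "X \<in> carrier_mat n q"
  shows "ones_form (lin_comb n q K c F) X = (\<Sum>k\<in>K. c k * ones_form (F k) X)"
proof -
  have "ones_form (lin_comb n q K c F) X
      = (\<Sum>x\<in>{..<n} \<times> {..<q}. \<Sum>k\<in>K. c k * (F k $$ x * conjugate (X $$ x)))"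
    unfolding ones_form_sum[OF lin_comb_carrier assms(3)]
    by (auto simp: sum_distrib_right mult.assoc intro!: sum.cong)
  also have "\<dots> = (\<Sum>k\<in>K. c k * ones_form (F k) X)"
    using assms(2,3) by (subst sum.swap) (simp add: ones_form_sum[of _ n q] sum_distrib_left)
  finally show ?thesis .
qed

lemma ones_form_lin_comb_right:
  assumes "finite K" "\<And>k. k \<in> K \<Longrightarrow> F k \<in> carrier_mat n q" "B \<in> carrier_mat n q"
  shows "ones_form B (lin_comb n q K c F) = (\<Sum>k\<in>K. conjugate (c k) * ones_form B (F k))"
proof -
  have "ones_form B (lin_comb n q K c F)
      = (\<Sum>x\<in>{..<n} \<times> {..<q}. \<Sum>k\<in>K. conjugate (c k) * (B $$ x * conjugate (F k $$ x)))"
    unfolding ones_form_sum[OF assms(3) lin_comb_carrier] using assms(1)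
    by (auto simp: sum_conjugate conjugate_dist_mul sum_distrib_left ac_simps intro!: sum.cong)
  also have "\<dots> = (\<Sum>k\<in>K. conjugate (c k) * ones_form B (F k))"
    using assms(2,3) by (subst sum.swap) (simp add: ones_form_sum[of _ n q] sum_distrib_left)
  finally show ?thesis .
qed

lemma vstack_eq_kron_mult:
  fixes A :: "'a::comm_ring_1 mat"
  assumes A: "A \<in> carrier_mat m m'"
    and G: "\<And>l. l < m' \<Longrightarrow> G l \<in> carrier_mat n q"
    and F: "\<And>k. k < m \<Longrightarrow> F k = lin_comb n q {..<m'} (\<lambda>l. A $$ (k,l)) G"
  shows "vstack n q m F = kron A (1\<^sub>m n) * vstack n q m' G"
proof (rule eq_matI)
  fix r c assume "r < dim_row (kron A (1\<^sub>m n) * vstack n q m' G)"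
    "c < dim_col (kron A (1\<^sub>m n) * vstack n q m' G)"
  then have r: "r < m*n" and c: "c < q" using A by (auto simp: kron_def vstack_def)
  then have "n > 0" by (cases n) auto
  then have rn: "r div n < m" "r mod n < n" using r by (auto simp: less_mult_imp_div_less)
  let ?t = "\<lambda>s. kron A (1\<^sub>m n) $$ (r,s) * vstack n q m' G $$ (s,c)"
  have block: "(\<Sum>s\<in>{l*n..<l*n+n}. ?t s) = A $$ (r div n, l) * G l $$ (r mod n, c)"
    if l: "l < m'" for l
  proof -
    have "(\<Sum>s\<in>{l*n..<l*n+n}. ?t s)
        = (\<Sum>s\<in>{l*n..<l*n+n}. if s = l*n + r mod n then A $$ (r div n, l) * G l $$ (r mod n, c) else 0)"
    proof (rule sum.cong)
      fix s assume s: "s \<in> {l*n..<l*n+n}"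
      then obtain b where b: "s = l*n + b" "b < n"
        by (metis add_less_cancel_left atLeastLessThan_iff le_add_diff_inverse)
      have "s < Suc l * n" using b by simp
      also have "\<dots> \<le> m'*n" using l by (intro mult_le_mono1) simp
      finally have "s < m'*n" .
      then show "?t s = (if s = l*n + r mod n then A $$ (r div n, l) * G l $$ (r mod n, c) else 0)"
        using A r c b rn by (auto simp: kron_def vstack_def)
    qed simp
    also have "\<dots> = A $$ (r div n, l) * G l $$ (r mod n, c)"
      using rn by simp
    finally show ?thesis .
  qed
  have "(kron A (1\<^sub>m n) * vstack n q m' G) $$ (r,c) = (\<Sum>s<m'*n. ?t s)"
    using A r c by (simp add: scalar_prod_def kron_def vstack_def atLeast0LessThan)
  also have "\<dots> = (\<Sum>l<m'. \<Sum>s\<in>{l*n..<l*n+n}. ?t s)"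
    by (rule sum.nat_group[symmetric])
  also have "\<dots> = (\<Sum>l<m'. A $$ (r div n, l) * G l $$ (r mod n, c))"
    using block by simp
  also have "\<dots> = vstack n q m F $$ (r,c)"
    using F[OF rn(1)] r c rn by (simp add: vstack_def)
  finally show "vstack n q m F $$ (r,c) = (kron A (1\<^sub>m n) * vstack n q m' G) $$ (r,c)" ..
qed (use A in \<open>auto simp: kron_def vstack_def\<close>)

lemma index_mult_mult_adjoint:
  fixes A H :: "'a::conjugatable_field mat"
  assumes "A \<in> carrier_mat m m" "H \<in> carrier_mat m m" "k < m" "l < m"
  shows "(A * H * mat_adjoint A) $$ (k,l) = (\<Sum>a<m. A $$ (k,a) * (\<Sum>b<m. conjugate (A $$ (l,b)) * H $$ (a,b)))"
proof -
  have "(A * H * mat_adjoint A) $$ (k,l) = (\<Sum>b<m. (\<Sum>a<m. A $$ (k,a) * H $$ (a,b)) * conjugate (A $$ (l,b)))"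
    using assms by (simp add: scalar_prod_def atLeast0LessThan)
  also have "\<dots> = (\<Sum>a<m. A $$ (k,a) * (\<Sum>b<m. conjugate (A $$ (l,b)) * H $$ (a,b)))"
    unfolding sum_distrib_left sum_distrib_right by (subst sum.swap) (simp add: ac_simps)
  finally show ?thesis .
qed

context vec_space
begin

lemma span_family_subset:
  assumes J: "finite J" and H: "H ` J \<subseteq> carrier_vec n" and G: "G ` K \<subseteq> carrier_vec n"
    and coeff: "\<And>k r. k \<in> K \<Longrightarrow> r < n \<Longrightarrow> G k $ r = (\<Sum>j\<in>J. a k j * H j $ r)"
  shows "span (G ` K) \<subseteq> span (H ` J)"
proof -
  have "G k \<in> span (H ` J)" if k: "k \<in> K" for k
  proof -
    define b where "b x = (\<Sum>j\<in>{j\<in>J. H j = x}. a k j)" for x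
    have "lincomb b (H ` J) = G k"
    proof (rule eq_vecI)
      fix r assume "r < dim_vec (G k)"
      then have r: "r < n" using G k by auto
      have "lincomb b (H ` J) $ r = (\<Sum>x\<in>H ` J. \<Sum>j\<in>{j\<in>J. H j = x}. a k j * H j $ r)"
        unfolding lincomb_index[OF r H] b_def sum_distrib_right by (rule sum.cong) auto
      also have "\<dots> = G k $ r"
        unfolding coeff[OF k r] by (rule sum.image_gen[OF J, symmetric])
      finally show "lincomb b (H ` J) $ r = G k $ r" .
    next
      show "dim_vec (lincomb b (H ` J)) = dim_vec (G k)"
        using lincomb_dim[OF finite_imageI[OF J] H] G k by auto
    qed
    from in_spanI[OF this[symmetric] finite_imageI[OF J] subset_refl]
    show ?thesis .
  qed
  then show ?thesis
    by (intro span_subsetI[OF H]) blast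
qed

lemma dim_span_le_card:
  assumes "S \<subseteq> carrier_vec n" "finite S"
  shows "vectorspace.dim class_ring (span_vs S) \<le> card S"
proof -
  obtain U where U: "maximal U (\<lambda>T. T \<subseteq> S \<and> lin_indpt T)"
    using maximal_exists[of "\<lambda>T. T \<subseteq> S \<and> lin_indpt T" "card S" "{}"] assms
    by (meson card_mono empty_iff empty_subsetI finite_lin_indpt2 rev_finite_subset)
  have "card U \<le> card S"
    using U assms by (simp add: card_mono maximal_def)
  then show ?thesis
    using dim_span[OF assms U] by simp
qed

lemma coeff_zero_if_dim_span_eq_card:
  assumes K: "finite K" and G: "G ` K \<subseteq> carrier_vec n"
    and dim: "vectorspace.dim class_ring (span_vs (G ` K)) = card K"
    and zero: "\<And>r. r < n \<Longrightarrow> (\<Sum>k\<in>K. c k * G k $ r) = 0"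
    and k: "k \<in> K"
  shows "c k = 0"
proof (rule ccontr)
  assume ck: "c k \<noteq> 0"
  have inj: "inj_on G K"
  proof -
    have "card K \<le> card (G ` K)"
      using dim_span_le_card[OF G] dim K by simp
    then show ?thesis
      using card_image_le[OF K, of G] by (intro eq_card_imp_inj_on[OF K]) linarith
  qed
  then have "lin_indpt (G ` K)"
    using full_dim_span[OF G] dim K by (simp add: card_image)
  moreover
  define b where "b x = c (inv_into K G x)" for x
  have "lincomb b (G ` K) = 0\<^sub>v n"
  proof (rule eq_vecI)
    fix r assume "r < dim_vec (0\<^sub>v n :: 'a vec)"
    then have r: "r < n" by simp
    have "lincomb b (G ` K) $ r = (\<Sum>k\<in>K. c k * G k $ r)"
      unfolding lincomb_index[OF r G] by (simp add: sum.reindex[OF inj] b_def inv_into_f_f[OF inj])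
    then show "lincomb b (G ` K) $ r = 0\<^sub>v n $ r" using zero[OF r] r by simp
  qed (use lincomb_dim[OF finite_imageI[OF K] G] in simp)
  then have "lin_dep (G ` K)"
    unfolding lin_dep_def using K k ck
    by (intro exI[of _ "G ` K"] exI[of _ b] exI[of _ "G k"]) (auto simp: b_def inv_into_f_f[OF inj])
  ultimately show False by simp
qed

end

locale matricization =
  fixes Lm :: "'a::conjugatable_field mat \<Rightarrow> 'a mat" and n q :: nat and LL :: "'a mat"
  assumes maps_to: "\<And>V. V \<in> carrier_mat q q \<Longrightarrow> Lm V \<in> carrier_mat n n"
    and LL_dim: "LL \<in> carrier_mat (n*n) (q*q)"
    and LL_matricization: "\<And>V. V \<in> carrier_mat q q \<Longrightarrow> LL *\<^sub>v vec_col V = vec_col (Lm V)"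
begin

abbreviation blocks :: "nat \<times> nat \<Rightarrow> 'a mat" where
  "blocks \<equiv> \<lambda>(i,j). blk LL n q i j"

lemma index_LL:
  assumes "a < n" "b < n" "c < q" "d < q"
  shows "LL $$ (a + n*b, c + q*d) = Lm (std_basis q c d) $$ (a,b)"
proof -
  have E: "std_basis q c d \<in> carrier_mat q q"
    by (simp add: std_basis_def)
  have row: "a + n*b < n*n"
  proof -
    have "a + n*b < n * Suc b" using assms(1) by simp
    also have "\<dots> \<le> n*n" using assms(2) by (intro mult_le_mono2) simp
    finally show ?thesis .
  qed
  have col: "c + q*d < q*q"
  proof -
    have "c + q*d < q * Suc d" using assms(3) by simp
    also have "\<dots> \<le> q*q" using assms(4) by (intro mult_le_mono2) simp
    finally show ?thesis .
  qed
  have "LL $$ (a + n*b, c + q*d) = (LL *\<^sub>v vec_col (std_basis q c d)) $ (a + n*b)"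
    unfolding vec_col_std_basis[OF assms(3,4)] using row col LL_dim by (simp add: row_def)
  also have "\<dots> = Lm (std_basis q c d) $$ (a,b)"
    using LL_matricization[OF E] maps_to[OF E] row assms(1) by (simp add: vec_col_def)
  finally show ?thesis .
qed

lemma index_blk:
  "i < n \<Longrightarrow> j < q \<Longrightarrow> a < n \<Longrightarrow> b < q \<Longrightarrow> blk LL n q i j $$ (a,b) = Lm (std_basis q b j) $$ (a,i)"
  using index_LL[of a i b j] by (simp add: blk_def ac_simps)

lemma col_choi_matrix:
  assumes t: "t < q*n"
  shows "col (choi_matrix Lm n q) t = vec_col (blk LL n q (t mod n) (t div n))"
proof -
  have "n > 0" using t by (cases n) auto
  then have tn: "t mod n < n" "t div n < q" using t by (auto simp: less_mult_imp_div_less)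
  show ?thesis
  proof (rule eq_vecI)
    fix r assume "r < dim_vec (vec_col (blk LL n q (t mod n) (t div n)))"
    then have r: "r < q*n" by (simp add: vec_col_def blk_def mult.commute)
    then have rn: "r mod n < n" "r div n < q" using \<open>n > 0\<close> by (auto simp: less_mult_imp_div_less)
    show "col (choi_matrix Lm n q) t $ r = vec_col (blk LL n q (t mod n) (t div n)) $ r"
      using r t rn tn by (simp add: choi_matrix_def index_vec_col[of _ n q] index_blk)
  qed (simp add: choi_matrix_def vec_col_def blk_def mult.commute)
qed

lemma set_cols_choi_matrix:
  "set (cols (choi_matrix Lm n q)) = (\<lambda>x. vec_col (blocks x)) ` ({..<n} \<times> {..<q})"
proof -
  have "(\<lambda>t. (t mod n, t div n)) ` {..<q*n} = {..<n} \<times> {..<q}"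
  proof (intro equalityI subsetI)
    fix x assume "x \<in> (\<lambda>t. (t mod n, t div n)) ` {..<q*n}"
    then obtain t where "t < q*n" "x = (t mod n, t div n)" by auto
    moreover from this have "n > 0" by (cases n) auto
    ultimately show "x \<in> {..<n} \<times> {..<q}" by (auto simp: less_mult_imp_div_less)
  next
    fix x assume "x \<in> {..<n} \<times> {..<q}"
    then obtain i j where x: "x = (i,j)" "i < n" "j < q" by auto
    have "j*n + i < Suc j * n" using x by simp
    also have "\<dots> \<le> q*n" using x by (intro mult_le_mono1) simp
    finally show "x \<in> (\<lambda>t. (t mod n, t div n)) ` {..<q*n}"
      using x by (intro image_eqI[of _ _ "j*n + i"]) auto
  qed
  then have "(\<lambda>x. vec_col (blocks x)) ` ({..<n} \<times> {..<q})
      = (\<lambda>x. vec_col (blocks x)) ` (\<lambda>t. (t mod n, t div n)) ` {..<q*n}"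
    by simp
  also have "\<dots> = (\<lambda>t. vec_col (blk LL n q (t mod n) (t div n))) ` {..<q*n}"
    by (simp add: image_image)
  also have "\<dots> = col (choi_matrix Lm n q) ` {..<q*n}"
    by (simp add: col_choi_matrix)
  also have "\<dots> = set (cols (choi_matrix Lm n q))"
    by (simp add: cols_def choi_matrix_def atLeast0LessThan)
  finally show ?thesis ..
qed

lemma blk_conjugate_swap:
  assumes star_linear: "\<And>V. V \<in> carrier_mat q q \<Longrightarrow> Lm (mat_adjoint V) = mat_adjoint (Lm V)"
    and "x \<in> {..<n} \<times> {..<q}" "y \<in> {..<n} \<times> {..<q}"
  shows "blocks x $$ y = conjugate (blocks y $$ x)"
proof -
  obtain i j a b where x: "x = (i,j)" "i < n" "j < q" and y: "y = (a,b)" "a < n" "b < q"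
    using assms(2,3) by auto
  have E: "std_basis q j b \<in> carrier_mat q q"
    by (simp add: std_basis_def)
  have "blocks x $$ y = mat_adjoint (Lm (std_basis q j b)) $$ (a,i)"
    using x y by (simp add: index_blk star_linear[OF E, symmetric] mat_adjoint_std_basis)
  also have "\<dots> = conjugate (blocks y $$ x)"
    using x y maps_to[OF E] by (simp add: index_blk)
  finally show ?thesis .
qed

lemma ones_form_lin_comb_blocks_swap:
  assumes star_linear: "\<And>V. V \<in> carrier_mat q q \<Longrightarrow> Lm (mat_adjoint V) = mat_adjoint (Lm V)"
  shows "ones_form (mat n q c) (lin_comb n q ({..<n} \<times> {..<q}) d blocks)
       = ones_form (lin_comb n q ({..<n} \<times> {..<q}) c blocks) (mat n q d)"
proof -
  let ?I = "{..<n} \<times> {..<q}"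
  have blocks_dim: "blocks x \<in> carrier_mat n q" for x
    by (simp split: prod.split)
  have index_mat: "mat n q f $$ x = f x" if "x \<in> ?I" for f :: "nat \<times> nat \<Rightarrow> 'a" and x
    using that by auto
  have "ones_form (mat n q c) (lin_comb n q ?I d blocks)
      = (\<Sum>y\<in>?I. conjugate (d y) * ones_form (mat n q c) (blocks y))"
    by (rule ones_form_lin_comb_right) (simp_all add: blocks_dim)
  also have "\<dots> = (\<Sum>y\<in>?I. conjugate (d y) * (\<Sum>x\<in>?I. c x * conjugate (blocks y $$ x)))"
    by (intro sum.cong refl) (simp add: ones_form_sum[OF _ blocks_dim] index_mat)
  also have "\<dots> = (\<Sum>y\<in>?I. conjugate (d y) * (\<Sum>x\<in>?I. c x * blocks x $$ y))"
  proof -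
    have "conjugate (blocks y $$ x) = blocks x $$ y" if "x \<in> ?I" "y \<in> ?I" for x y
      using blk_conjugate_swap[OF star_linear that] by simp
    then show ?thesis by (simp cong: sum.cong)
  qed
  also have "\<dots> = (\<Sum>y\<in>?I. lin_comb n q ?I c blocks $$ y * conjugate (mat n q d $$ y))"
    by (intro sum.cong refl) (auto simp: index_mat sum_distrib_left mult.commute)
  also have "\<dots> = ones_form (lin_comb n q ?I c blocks) (mat n q d)"
    by (simp add: ones_form_sum[of _ n q])
  finally show ?thesis .
qed

end

locale block_frame = matricization Lm n q LL
  for Lm :: "'a::conjugatable_field mat \<Rightarrow> 'a mat" and n q LL +
  fixes m :: nat and Lk :: "nat \<Rightarrow> 'a mat" and alpha beta :: "nat \<Rightarrow> nat \<Rightarrow> nat \<Rightarrow> 'a"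
  assumes m_rank: "m = vec_space.rank (q*n) (choi_matrix Lm n q)"
    and Lk_dim: "\<And>k. k < m \<Longrightarrow> Lk k \<in> carrier_mat n q"
    and alpha: "\<And>i j. i < n \<Longrightarrow> j < q \<Longrightarrow> blk LL n q i j = lin_comb n q {..<m} (alpha i j) Lk"
    and beta: "\<And>k. k < m \<Longrightarrow> Lk k = lin_comb n q ({..<n} \<times> {..<q}) (\<lambda>(i,j). beta k i j) blocks"
begin

lemma lin_comb_coeff_unique:
  assumes eq: "lin_comb n q {..<m} c Lk = lin_comb n q {..<m} d Lk" and k: "k < m"
  shows "c k = d k"
proof -
  interpret V: vec_space "TYPE('a)" "q*n" .
  let ?I = "{..<n} \<times> {..<q}"
  let ?G = "\<lambda>k. vec_col (Lk k)"
  let ?B = "\<lambda>x. vec_col (blocks x)"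
  have G: "?G ` {..<m} \<subseteq> carrier_vec (q*n)"
    using Lk_dim by (auto intro: vec_col_carrier)
  have B: "?B ` ?I \<subseteq> carrier_vec (q*n)"
    by (auto intro: vec_col_carrier)
  have "n > 0" if "r < q*n" for r
    using that by (cases n) auto
  then have rn: "r mod n < n" "r div n < q" if "r < q*n" for r
    using that by (auto simp: less_mult_imp_div_less)
  have "V.span (?G ` {..<m}) = V.span (?B ` ?I)"
  proof
    show "V.span (?G ` {..<m}) \<subseteq> V.span (?B ` ?I)"
      by (rule V.span_family_subset[OF _ B G, where a = "\<lambda>k (i,j). beta k i j"])
        (use beta Lk_dim rn in \<open>auto simp: index_vec_col[of _ n q] case_prod_beta\<close>)
    show "V.span (?B ` ?I) \<subseteq> V.span (?G ` {..<m})"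
      by (rule V.span_family_subset[OF _ G B, where a = "\<lambda>(i,j). alpha i j"])
        (use alpha Lk_dim rn in \<open>auto simp: index_vec_col[of _ n q]\<close>)
  qed
  then have "vectorspace.dim class_ring (V.span_vs (?G ` {..<m})) = card {..<m}"
    using m_rank by (simp add: V.rank_def set_cols_choi_matrix)
  moreover have "(\<Sum>l<m. (c l - d l) * ?G l $ r) = 0" if r: "r < q*n" for r
  proof -
    have "lin_comb n q {..<m} c Lk $$ (r mod n, r div n) = lin_comb n q {..<m} d Lk $$ (r mod n, r div n)"
      using eq by simp
    then show ?thesis
      using r rn[OF r] Lk_dim by (simp add: index_vec_col[of _ n q] left_diff_distrib sum_subtractf)
  qed
  ultimately show ?thesis
    using V.coeff_zero_if_dim_span_eq_card[OF finite_lessThan G, of "\<lambda>l. c l - d l" k] k by simp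
qed

end

definition frame_change ::
    "nat \<Rightarrow> nat \<Rightarrow> nat \<Rightarrow> (nat \<Rightarrow> nat \<Rightarrow> nat \<Rightarrow> 'a::conjugatable_field) \<Rightarrow> (nat \<Rightarrow> nat \<Rightarrow> nat \<Rightarrow> 'a) \<Rightarrow> 'a mat" where
  "frame_change n q m beta alpha' = mat m m (\<lambda>(k,l). ones_form (coefB n q beta k) (coefA n q alpha' l))"

lemma dim_frame_change [simp]:
  "dim_row (frame_change n q m beta alpha') = m" "dim_col (frame_change n q m beta alpha') = m"
  by (simp_all add: frame_change_def)

lemma frame_change_carrier [simp]: "frame_change n q m beta alpha' \<in> carrier_mat m m"
  by (simp add: carrier_matI)

lemma index_frame_change:
  assumes "k < m" "l < m"
  shows "frame_change n q m beta alpha' $$ (k,l) = (\<Sum>(i,j)\<in>{..<n} \<times> {..<q}. beta k i j * alpha' i j l)"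
  using assms by (auto simp: frame_change_def ones_form_sum[of _ n q] coefA_def coefB_def intro!: sum.cong)

locale frame_pair =
  F: block_frame Lm n q LL m Lk alpha beta + F': block_frame Lm n q LL m Lk' alpha' beta'
  for Lm :: "'a::conjugatable_field mat \<Rightarrow> 'a mat" and n q LL m Lk alpha beta Lk' alpha' beta'

text \<open>Exchanging the two families gives again a frame pair; its change matrix is the inverse of \<open>\<Phi>\<close>.\<close>

sublocale frame_pair \<subseteq> swap: frame_pair Lm n q LL m Lk' alpha' beta' Lk alpha beta
  by unfold_locales

context frame_pair
begin

abbreviation \<Phi> :: "'a mat" where
  "\<Phi> \<equiv> frame_change n q m beta alpha'"

lemma Lk_eq_lin_comb_Lk':
  assumes k: "k < m"
  shows "Lk k = lin_comb n q {..<m} (\<lambda>l. \<Phi> $$ (k,l)) Lk'"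
proof -
  have "Lk k = lin_comb n q ({..<n} \<times> {..<q}) (\<lambda>(i,j). beta k i j) F.blocks"
    by (rule F.beta[OF k])
  also have "\<dots> = lin_comb n q {..<m} (\<lambda>l. \<Phi> $$ (k,l)) Lk'"
    using k by (subst lin_comb_lin_comb[where d = "\<lambda>(i,j). alpha' i j"])
      (auto simp: F'.alpha index_frame_change case_prod_beta intro!: lin_comb_cong)
  finally show ?thesis .
qed

lemma alpha'_eq_alpha_mult_frame_change:
  assumes "i < n" "j < q" "l < m"
  shows "alpha' i j l = (\<Sum>k<m. alpha i j k * \<Phi> $$ (k,l))"
proof (rule F'.lin_comb_coeff_unique[OF _ assms(3)])
  have "lin_comb n q {..<m} (alpha' i j) Lk' = lin_comb n q {..<m} (alpha i j) Lk"
    using assms F.alpha F'.alpha by simp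
  also have "\<dots> = lin_comb n q {..<m} (\<lambda>l. \<Sum>k<m. alpha i j k * \<Phi> $$ (k,l)) Lk'"
    by (rule lin_comb_lin_comb) (simp add: Lk_eq_lin_comb_Lk')
  finally show "lin_comb n q {..<m} (alpha' i j) Lk' = \<dots>" .
qed

end

lemma (in frame_pair) frame_change_mult_swap: "\<Phi> * swap.\<Phi> = 1\<^sub>m m"
proof (rule eq_matI)
  fix k k' assume "k < dim_row (1\<^sub>m m :: 'a mat)" "k' < dim_col (1\<^sub>m m :: 'a mat)"
  then have k: "k < m" and k': "k' < m" by auto
  have "lin_comb n q {..<m} (\<lambda>j. \<Sum>l<m. \<Phi> $$ (k,l) * swap.\<Phi> $$ (l,j)) Lk
      = lin_comb n q {..<m} (\<lambda>l. \<Phi> $$ (k,l)) Lk'"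
    by (rule lin_comb_lin_comb[symmetric]) (simp add: swap.Lk_eq_lin_comb_Lk')
  also have "\<dots> = Lk k"
    by (rule Lk_eq_lin_comb_Lk'[OF k, symmetric])
  also have "\<dots> = lin_comb n q {..<m} (\<lambda>j. if j = k then 1 else 0) Lk"
    by (rule lin_comb_delta[symmetric]) (simp_all add: k F.Lk_dim)
  finally have "(\<Sum>l<m. \<Phi> $$ (k,l) * swap.\<Phi> $$ (l,k')) = (if k' = k then 1 else 0)"
    by (rule F.lin_comb_coeff_unique[OF _ k'])
  then show "(\<Phi> * swap.\<Phi>) $$ (k,k') = 1\<^sub>m m $$ (k,k')"
    using k k' by (simp add: scalar_prod_def atLeast0LessThan)
qed auto

lemma (in frame_pair) invertible_frame_change: "invertible_mat \<Phi>"
  unfolding invertible_mat_def inverts_mat_def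
  using frame_change_mult_swap swap.frame_change_mult_swap by (auto intro!: exI[of _ "swap.\<Phi>"])

lemma (in frame_pair) vstack_Lk_eq_kron_mult: "vstack n q m Lk = kron \<Phi> (1\<^sub>m n) * vstack n q m Lk'"
  by (rule vstack_eq_kron_mult) (simp_all add: F'.Lk_dim Lk_eq_lin_comb_Lk')

lemma (in frame_pair) kron_mult_vstack_coefA:
  "kron (mat_adjoint \<Phi>) (1\<^sub>m n) * vstack n q m (coefA n q alpha) = vstack n q m (coefA n q alpha')"
proof (rule vstack_eq_kron_mult[symmetric])
  fix l assume l: "l < m"
  show "coefA n q alpha' l = lin_comb n q {..<m} (\<lambda>k. mat_adjoint \<Phi> $$ (l,k)) (coefA n q alpha)"
  proof (rule eq_matI)
    fix i j assume "i < dim_row (lin_comb n q {..<m} (\<lambda>k. mat_adjoint \<Phi> $$ (l,k)) (coefA n q alpha))"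
      "j < dim_col (lin_comb n q {..<m} (\<lambda>k. mat_adjoint \<Phi> $$ (l,k)) (coefA n q alpha))"
    then have i: "i < n" and j: "j < q" by simp_all
    show "coefA n q alpha' l $$ (i,j) = lin_comb n q {..<m} (\<lambda>k. mat_adjoint \<Phi> $$ (l,k)) (coefA n q alpha) $$ (i,j)"
      using i j l by (simp add: coefA_def alpha'_eq_alpha_mult_frame_change sum_conjugate conjugate_dist_mul mult.commute)
  qed (simp_all add: coefA_def)
qed (simp_all add: coefA_def carrier_matI)

lemma (in frame_pair) constrH_eq_congruence:
  assumes star_linear: "\<And>V. V \<in> carrier_mat q q \<Longrightarrow> Lm (mat_adjoint V) = mat_adjoint (Lm V)"
  shows "constrH m (coefB n q beta) Lk = \<Phi> * constrH m (coefB n q beta') Lk' * mat_adjoint \<Phi>"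
proof (rule eq_matI)
  let ?I = "{..<n} \<times> {..<q}"
  let ?H' = "constrH m (coefB n q beta') Lk'"
  fix k l assume "k < dim_row (\<Phi> * ?H' * mat_adjoint \<Phi>)" "l < dim_col (\<Phi> * ?H' * mat_adjoint \<Phi>)"
  then have k: "k < m" and l: "l < m" by simp_all
  have coefB_dim: "coefB n q b a \<in> carrier_mat n q" for b :: "nat \<Rightarrow> nat \<Rightarrow> nat \<Rightarrow> 'a" and a
    by (simp add: coefB_def)
  have ones_form_swap: "ones_form (coefB n q b a) (lin_comb n q ?I (\<lambda>(i,j). b' c i j) F.blocks)
      = ones_form (lin_comb n q ?I (\<lambda>(i,j). b a i j) F.blocks) (coefB n q b' c)" for b b' a c
    unfolding coefB_def by (rule F.ones_form_lin_comb_blocks_swap[OF star_linear])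
  have ones_form_Lk'_right: "ones_form (coefB n q beta' a) (lin_comb n q {..<m} c Lk')
      = (\<Sum>b<m. conjugate (c b) * ones_form (coefB n q beta' a) (Lk' b))" for a c
    by (rule ones_form_lin_comb_right) (simp_all add: F'.Lk_dim coefB_dim)
  have ones_form_Lk'_left: "ones_form (lin_comb n q {..<m} c Lk') (coefB n q beta l)
      = (\<Sum>a<m. c a * ones_form (Lk' a) (coefB n q beta l))" for c
    by (rule ones_form_lin_comb_left) (simp_all add: F'.Lk_dim coefB_dim)
  have "(\<Phi> * ?H' * mat_adjoint \<Phi>) $$ (k,l)
      = (\<Sum>a<m. \<Phi> $$ (k,a) * (\<Sum>b<m. conjugate (\<Phi> $$ (l,b)) * ?H' $$ (a,b)))"
    using k l by (intro index_mult_mult_adjoint) (simp_all add: constrH_def carrier_matI)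
  also have "\<dots> = (\<Sum>a<m. \<Phi> $$ (k,a) * ones_form (coefB n q beta' a) (lin_comb n q {..<m} (\<lambda>b. \<Phi> $$ (l,b)) Lk'))"
    by (simp add: ones_form_Lk'_right constrH_def)
  also have "\<dots> = (\<Sum>a<m. \<Phi> $$ (k,a) * ones_form (Lk' a) (coefB n q beta l))"
    using l by (intro sum.cong refl)
      (simp add: Lk_eq_lin_comb_Lk'[symmetric] F.beta[OF l] F'.beta ones_form_swap)
  also have "\<dots> = ones_form (lin_comb n q {..<m} (\<lambda>a. \<Phi> $$ (k,a)) Lk') (coefB n q beta l)"
    by (simp add: ones_form_Lk'_left)
  also have "\<dots> = ones_form (coefB n q beta k) (Lk l)"
    using k l by (simp add: Lk_eq_lin_comb_Lk'[symmetric] F.beta ones_form_swap)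
  also have "\<dots> = constrH m (coefB n q beta) Lk $$ (k,l)"
    using k l by (simp add: constrH_def)
  finally show "constrH m (coefB n q beta) Lk $$ (k,l) = (\<Phi> * ?H' * mat_adjoint \<Phi>) $$ (k,l)" ..
qed (simp_all add: constrH_def)

theorem theorem1p2:
  fixes Lm :: "'a::conjugatable_field mat \<Rightarrow> 'a mat"
    and n q m :: nat
    and LL :: "'a mat"
    and Lk Lk' :: "nat \<Rightarrow> 'a mat"
    and alpha alpha' :: "nat \<Rightarrow> nat \<Rightarrow> nat \<Rightarrow> 'a"
    and beta beta' :: "nat \<Rightarrow> nat \<Rightarrow> nat \<Rightarrow> 'a"
  assumes maps_to: "\<And>V. V \<in> carrier_mat q q \<Longrightarrow> Lm V \<in> carrier_mat n n"
    and additive: "\<And>V W. V \<in> carrier_mat q q \<Longrightarrow> W \<in> carrier_mat q q \<Longrightarrow> Lm (V + W) = Lm V + Lm W"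
    and homogeneous: "\<And>c V. V \<in> carrier_mat q q \<Longrightarrow> Lm (c \<cdot>\<^sub>m V) = c \<cdot>\<^sub>m Lm V"
    and star_linear: "\<And>V. V \<in> carrier_mat q q \<Longrightarrow> Lm (mat_adjoint V) = mat_adjoint (Lm V)"
    and LL_dim: "LL \<in> carrier_mat (n*n) (q*q)"
    and LL_matricization: "\<And>V. V \<in> carrier_mat q q \<Longrightarrow> LL *\<^sub>v vec_col V = vec_col (Lm V)"
    and m_rank: "m = vec_space.rank (q*n) (choi_matrix Lm n q)"
    and Lk_dim: "\<And>k. k < m \<Longrightarrow> Lk k \<in> carrier_mat n q"
    and Lk'_dim: "\<And>k. k < m \<Longrightarrow> Lk' k \<in> carrier_mat n q"
    and Lk_span: "mspan n q {..<m} Lk = mspan n q ({..<n} \<times> {..<q}) (\<lambda>(i,j). blk LL n q i j)"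
    and Lk'_span: "mspan n q {..<m} Lk' = mspan n q ({..<n} \<times> {..<q}) (\<lambda>(i,j). blk LL n q i j)"
    and alpha: "\<And>i j. i < n \<Longrightarrow> j < q \<Longrightarrow> blk LL n q i j = lin_comb n q {..<m} (alpha i j) Lk"
    and alpha': "\<And>i j. i < n \<Longrightarrow> j < q \<Longrightarrow> blk LL n q i j = lin_comb n q {..<m} (alpha' i j) Lk'"
    and beta: "\<And>k. k < m \<Longrightarrow> Lk k = lin_comb n q ({..<n} \<times> {..<q}) (\<lambda>(i,j). beta k i j) (\<lambda>(i,j). blk LL n q i j)"
    and beta': "\<And>k. k < m \<Longrightarrow> Lk' k = lin_comb n q ({..<n} \<times> {..<q}) (\<lambda>(i,j). beta' k i j) (\<lambda>(i,j). blk LL n q i j)"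
  shows "let A = coefA n q alpha; A' = coefA n q alpha';
             B = coefB n q beta; B' = coefB n q beta';
             H = constrH m B Lk; H' = constrH m B' Lk';
             \<Phi> = mat m m (\<lambda>(k,l). ones_form (B k) (A' l))
         in \<Phi> \<in> carrier_mat m m \<and> invertible_mat \<Phi>
            \<and> vstack n q m Lk = kron \<Phi> (1\<^sub>m n) * vstack n q m Lk'
            \<and> kron (mat_adjoint \<Phi>) (1\<^sub>m n) * vstack n q m A = vstack n q m A'
            \<and> H = \<Phi> * H' * mat_adjoint \<Phi>"
proof -
  interpret frame_pair Lm n q LL m Lk alpha beta Lk' alpha' beta'
    by unfold_locales (fact maps_to LL_dim LL_matricization m_rank Lk_dim Lk'_dim alpha alpha' beta beta')+
  show ?thesis
    unfolding Let_def frame_change_def[symmetric]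
    using invertible_frame_change vstack_Lk_eq_kron_mult kron_mult_vstack_coefA
      constrH_eq_congruence[OF star_linear] by simp
qed

end
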